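(* Let $A=k[x_1][x_2;\alpha_2,\delta_2]_p\cdots[x_n;\alpha_n,\delta_n]_p$ be an iterated Poisson polynomial algebra over a field $k$ of characteristic zero, supporting a rational Poisson action of a torus $H=(k^\times)^r$ such that $x_1,\dots,x_n$ are $H$-eigenvectors. Assume there exist $\eta_1,\dots,\eta_n\in\mathfrak h=\operatorname{Lie}H$ such that $\eta_i.x_j=\alpha_i(x_j)$ for $i>j$ and the $\eta_i$-eigenvalue $s_i$ of $x_i$ is nonzero for each $i$. Then $\alpha_i\delta_i=\delta_i(\alpha_i+s_i)$ for all $i$.
   Context: If $B$ is a Poisson algebra, $\alpha$ a Poisson derivation of $B$ and $\delta$ a derivation of $B$ with $\delta(\{a,b\})=\{\delta(a),b\}+\{a,\delta(b)\}+\alpha(a)\delta(b)-\delta(a)\alpha(b)$, then $B[x;\alpha,\delta]_p$ is $B[x]$ with the unique Poisson bracket extending that of $B$ with $\{x,b\}=\alpha(b)x+\delta(b)$; an iterated Poisson polynomial algebra iterates this starting from $k[x_1]$. A rational Poisson action of $H$ is an action by Poisson automorphisms with $A$ the direct sum of $H$-eigenspaces $A_x$, $x\in X(H)\cong\mathbb Z^r$ ($(m_i)\leftrightarrow h\mapsto\prod h_i^{m_i}$). $\mathfrak h=k^r$ acts by $\eta.a=(\eta|x)a$ for $a\in A_x$ (dot product), $(\eta|x)$ being the $\eta$-eigenvalue of $a$. *)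

theory Defs
  imports Main "HOL-Library.Poly_Mapping"
begin

text \<open>Commutative polynomials over a field 'k in the variables x_1, x_2, ...,
  represented as finitely supported maps from monomials (exponent vectors) to coefficients.\<close>
type_synonym 'k mpoly = "(nat \<Rightarrow>\<^sub>0 nat) \<Rightarrow>\<^sub>0 'k"

definition Const :: "'k::comm_ring_1 \<Rightarrow> 'k mpoly" where
  "Const c = Poly_Mapping.single 0 c"

definition smult :: "'k::comm_ring_1 \<Rightarrow> 'k mpoly \<Rightarrow> 'k mpoly" where
  "smult c p = Const c * p"

definition Var :: "nat \<Rightarrow> 'k::comm_ring_1 mpoly" where
  "Var i = Poly_Mapping.single (Poly_Mapping.single i 1) 1"

definition Bsub :: "nat \<Rightarrow> 'k::comm_ring_1 mpoly set" where
  "Bsub i = {p. \<forall>m \<in> Poly_Mapping.keys p. \<forall>j \<in> Poly_Mapping.keys (m :: nat \<Rightarrow>\<^sub>0 nat). 1 \<le> j \<and> j \<le> i}"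

definition poisson_bracket ::
  "'k::field mpoly set \<Rightarrow> ('k mpoly \<Rightarrow> 'k mpoly \<Rightarrow> 'k mpoly) \<Rightarrow> bool" where
  "poisson_bracket B br \<longleftrightarrow>
     (\<forall>a\<in>B. \<forall>b\<in>B. br a b \<in> B) \<and>
     (\<forall>a\<in>B. \<forall>b\<in>B. \<forall>c\<in>B. br (a + b) c = br a c + br b c) \<and>
     (\<forall>a\<in>B. \<forall>b\<in>B. \<forall>c. br (smult c a) b = smult c (br a b)) \<and>
     (\<forall>a\<in>B. \<forall>b\<in>B. br a b = - br b a) \<and>
     (\<forall>a\<in>B. \<forall>b\<in>B. \<forall>c\<in>B. br a (br b c) + br b (br c a) + br c (br a b) = 0) \<and>
     (\<forall>a\<in>B. \<forall>b\<in>B. \<forall>c\<in>B. br a (b * c) = br a b * c + b * br a c)"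

definition derivation :: "'k::field mpoly set \<Rightarrow> ('k mpoly \<Rightarrow> 'k mpoly) \<Rightarrow> bool" where
  "derivation B d \<longleftrightarrow>
     (\<forall>a\<in>B. d a \<in> B) \<and>
     (\<forall>a\<in>B. \<forall>b\<in>B. d (a + b) = d a + d b) \<and>
     (\<forall>a\<in>B. \<forall>c. d (smult c a) = smult c (d a)) \<and>
     (\<forall>a\<in>B. \<forall>b\<in>B. d (a * b) = d a * b + a * d b)"

definition poisson_derivation ::
  "'k::field mpoly set \<Rightarrow> ('k mpoly \<Rightarrow> 'k mpoly \<Rightarrow> 'k mpoly) \<Rightarrow> ('k mpoly \<Rightarrow> 'k mpoly) \<Rightarrow> bool" where
  "poisson_derivation B br a \<longleftrightarrow> derivation B a \<and>
     (\<forall>u\<in>B. \<forall>v\<in>B. a (br u v) = br (a u) v + br u (a v))"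

definition twisted_derivation ::
  "'k::field mpoly set \<Rightarrow> ('k mpoly \<Rightarrow> 'k mpoly \<Rightarrow> 'k mpoly) \<Rightarrow> ('k mpoly \<Rightarrow> 'k mpoly)
     \<Rightarrow> ('k mpoly \<Rightarrow> 'k mpoly) \<Rightarrow> bool" where
  "twisted_derivation B br a d \<longleftrightarrow> derivation B d \<and>
     (\<forall>u\<in>B. \<forall>v\<in>B. d (br u v) = br (d u) v + br u (d v) + a u * d v - d u * a v)"

definition iterated_poisson ::
  "nat \<Rightarrow> ('k::field mpoly \<Rightarrow> 'k mpoly \<Rightarrow> 'k mpoly) \<Rightarrow> (nat \<Rightarrow> 'k mpoly \<Rightarrow> 'k mpoly)
     \<Rightarrow> (nat \<Rightarrow> 'k mpoly \<Rightarrow> 'k mpoly) \<Rightarrow> bool" where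
  "iterated_poisson n br \<alpha> \<delta> \<longleftrightarrow>
     (\<forall>i\<in>{1..n}. poisson_bracket (Bsub i) br) \<and>
     (\<forall>i\<in>{2..n}. poisson_derivation (Bsub (i - 1)) br (\<alpha> i) \<and>
                 twisted_derivation (Bsub (i - 1)) br (\<alpha> i) (\<delta> i) \<and>
                 (\<forall>b\<in>Bsub (i - 1). br (Var i) b = \<alpha> i b * Var i + \<delta> i b))"

text \<open>Torus H = (k^x)^r, indexed by a finite type 'r; characters X(H) = Z^r.\<close>
definition torus :: "('r::finite \<Rightarrow> 'k::field) set" where
  "torus = {h. \<forall>l. h l \<noteq> 0}"

definition character :: "('r::finite \<Rightarrow> int) \<Rightarrow> ('r \<Rightarrow> 'k::field) \<Rightarrow> 'k" where
  "character m h = (\<Prod>l\<in>UNIV. power_int (h l) (m l))"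

definition eigenspace ::
  "'k::field mpoly set \<Rightarrow> (('r::finite \<Rightarrow> 'k) \<Rightarrow> 'k mpoly \<Rightarrow> 'k mpoly) \<Rightarrow> ('r \<Rightarrow> int) \<Rightarrow> 'k mpoly set" where
  "eigenspace A \<rho> m = {a\<in>A. \<forall>h\<in>torus. \<rho> h a = smult (character m h) a}"

text \<open>The pairing (eta|m) for eta in Lie H = k^r and m in X(H) = Z^r.\<close>
definition pairing :: "('r::finite \<Rightarrow> 'k::field) \<Rightarrow> ('r \<Rightarrow> int) \<Rightarrow> 'k" where
  "pairing \<eta> m = (\<Sum>l\<in>UNIV. \<eta> l * of_int (m l))"

definition poisson_automorphism ::
  "'k::field mpoly set \<Rightarrow> ('k mpoly \<Rightarrow> 'k mpoly \<Rightarrow> 'k mpoly) \<Rightarrow> ('k mpoly \<Rightarrow> 'k mpoly) \<Rightarrow> bool" where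
  "poisson_automorphism A br f \<longleftrightarrow> bij_betw f A A \<and> f 1 = 1 \<and>
     (\<forall>a\<in>A. \<forall>b\<in>A. f (a + b) = f a + f b) \<and>
     (\<forall>a\<in>A. \<forall>b\<in>A. f (a * b) = f a * f b) \<and>
     (\<forall>a\<in>A. \<forall>c. f (smult c a) = smult c (f a)) \<and>
     (\<forall>a\<in>A. \<forall>b\<in>A. f (br a b) = br (f a) (f b))"

definition rational_poisson_action ::
  "'k::field mpoly set \<Rightarrow> ('k mpoly \<Rightarrow> 'k mpoly \<Rightarrow> 'k mpoly)
     \<Rightarrow> (('r::finite \<Rightarrow> 'k) \<Rightarrow> 'k mpoly \<Rightarrow> 'k mpoly) \<Rightarrow> bool" where
  "rational_poisson_action A br \<rho> \<longleftrightarrow>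
     (\<forall>h\<in>torus. poisson_automorphism A br (\<rho> h)) \<and>
     (\<forall>a\<in>A. \<rho> (\<lambda>_. 1) a = a) \<and>
     (\<forall>h\<in>torus. \<forall>h'\<in>torus. \<forall>a\<in>A. \<rho> (\<lambda>l. h l * h' l) a = \<rho> h (\<rho> h' a)) \<and>
     (\<forall>a\<in>A. \<exists>S f. finite S \<and> (\<forall>m\<in>S. f m \<in> eigenspace A \<rho> m) \<and> a = (\<Sum>m\<in>S. f m)) \<and>
     (\<forall>S f. finite S \<and> (\<forall>m\<in>S. f m \<in> eigenspace A \<rho> m) \<and> (\<Sum>m\<in>S. f m) = 0
        \<longrightarrow> (\<forall>m\<in>S. f m = 0))"

end

theory Submission
  imports Defs
begin

text \<open>Since the \<open>x\<^sub>j\<close> are \<open>H\<close>-eigenvectors and \<open>H\<close> acts by algebra automorphisms,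
  \<open>h\<close> multiplies each monomial by the character of its weight \<open>\<Sum> e\<^sub>j \<chi>\<^sub>j\<close>; infinitesimally,
  \<open>\<eta>\<^sub>i\<close> acts as the derivation multiplying a monomial of weight \<open>\<mu>\<close> by \<open>(\<eta>\<^sub>i|\<mu>)\<close>. By
  hypothesis \<open>\<alpha>\<^sub>i\<close> agrees with it on the generators \<open>x\<^sub>j\<close>, \<open>j < i\<close>, hence everywhere.
  As \<open>\<delta>\<^sub>i(x\<^sub>j) = {x\<^sub>i, x\<^sub>j} - \<alpha>\<^sub>i(x\<^sub>j) x\<^sub>i\<close> and the bracket respects the grading,
  \<open>\<delta>\<^sub>i(x\<^sub>j)\<close> has weight \<open>\<chi>\<^sub>i + \<chi>\<^sub>j\<close>; so \<open>\<alpha>\<^sub>i \<delta>\<^sub>i (x\<^sub>j) = (t\<^sub>j + s\<^sub>i) \<delta>\<^sub>i(x\<^sub>j)\<close> while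
  \<open>\<delta>\<^sub>i \<alpha>\<^sub>i (x\<^sub>j) = t\<^sub>j \<delta>\<^sub>i(x\<^sub>j)\<close> with \<open>t\<^sub>j = (\<eta>\<^sub>i|\<chi>\<^sub>j)\<close>. The derivations \<open>[\<alpha>\<^sub>i, \<delta>\<^sub>i]\<close> and
  \<open>s\<^sub>i \<delta>\<^sub>i\<close> thus agree on generators, hence everywhere. Characteristic zero makes characters
  separate weights.\<close>

lemma poly_mapping_add_single_induct:
  fixes p :: "'a \<Rightarrow>\<^sub>0 'b::comm_monoid_add"
  assumes "P 0"
    and "\<And>f a b. a \<notin> Poly_Mapping.keys f \<Longrightarrow> b \<noteq> 0 \<Longrightarrow> P f \<Longrightarrow> P (f + Poly_Mapping.single a b)"
  shows "P p"
proof (induct p rule: Poly_Mapping.update_induct)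
  case const
  show ?case by (fact assms(1))
next
  case (update f a b)
  have "Poly_Mapping.update a b f = f + Poly_Mapping.single a b"
    using update(1)
    by (intro poly_mapping_eqI) (auto simp: lookup_update lookup_add lookup_single in_keys_iff when_def)
  with assms(2) update show ?case by simp
qed

lemma keys_add_single:
  "a \<notin> Poly_Mapping.keys f \<Longrightarrow> b \<noteq> 0 \<Longrightarrow>
    Poly_Mapping.keys (f + Poly_Mapping.single a b) = insert a (Poly_Mapping.keys f)"
  by (auto simp: in_keys_iff lookup_add lookup_single when_def split: if_splits)

subsection \<open>Diagonal operators\<close>

definition scale_monomials :: "((nat \<Rightarrow>\<^sub>0 nat) \<Rightarrow> 'k::field) \<Rightarrow> 'k mpoly \<Rightarrow> 'k mpoly" where
  "scale_monomials g p = Poly_Mapping.mapp (\<lambda>\<mu> c. g \<mu> * c) p"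

lemma lookup_scale_monomials:
  "Poly_Mapping.lookup (scale_monomials g p) \<mu> = g \<mu> * Poly_Mapping.lookup p \<mu>"
  by (auto simp: scale_monomials_def lookup_mapp when_def in_keys_iff)

lemma keys_scale_monomials: "Poly_Mapping.keys (scale_monomials g p) \<subseteq> Poly_Mapping.keys p"
  unfolding scale_monomials_def by (rule keys_mapp_subset)

lemma scale_monomials_add: "scale_monomials g (p + q) = scale_monomials g p + scale_monomials g q"
  by (intro poly_mapping_eqI) (simp add: lookup_scale_monomials lookup_add algebra_simps)

lemma scale_monomials_single:
  "scale_monomials g (Poly_Mapping.single \<mu> c) = Poly_Mapping.single \<mu> (g \<mu> * c)"
  by (intro poly_mapping_eqI) (simp add: lookup_scale_monomials lookup_single when_def)

lemma scale_monomials_zero [simp]: "scale_monomials g 0 = 0"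
  by (intro poly_mapping_eqI) (simp add: lookup_scale_monomials)

lemma scale_monomials_mult:
  assumes "\<And>\<mu> \<nu>. g (\<mu> + \<nu>) = g \<mu> * g \<nu>"
  shows "scale_monomials g (p * q) = scale_monomials g p * scale_monomials g q"
proof (induct p rule: poly_mapping_add_single_induct)
  case (2 f a b)
  have "scale_monomials g (Poly_Mapping.single a b * q)
      = scale_monomials g (Poly_Mapping.single a b) * scale_monomials g q"
    by (induct q rule: poly_mapping_add_single_induct)
       (simp_all add: distrib_left scale_monomials_add scale_monomials_single mult_single assms ac_simps)
  with 2 show ?case by (simp add: distrib_right scale_monomials_add)
qed simp

lemma scale_monomials_leibniz:
  assumes "\<And>\<mu> \<nu>. g (\<mu> + \<nu>) = g \<mu> + g \<nu>"
  shows "scale_monomials g (p * q) = scale_monomials g p * q + p * scale_monomials g q"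
proof (induct p rule: poly_mapping_add_single_induct)
  case (2 f a b)
  have "scale_monomials g (Poly_Mapping.single a b * q)
      = scale_monomials g (Poly_Mapping.single a b) * q + Poly_Mapping.single a b * scale_monomials g q"
    by (induct q rule: poly_mapping_add_single_induct)
       (simp_all add: distrib_left scale_monomials_add scale_monomials_single mult_single assms
         algebra_simps flip: single_add)
  with 2 show ?case by (simp add: distrib_right scale_monomials_add algebra_simps)
qed simp

lemma lookup_smult: "Poly_Mapping.lookup (smult (c::'k::field) p) \<mu> = c * Poly_Mapping.lookup p \<mu>"
proof -
  have "smult c p = scale_monomials (\<lambda>_. c) p"
  proof (induct p rule: poly_mapping_add_single_induct)
    case (2 f a b)
    then show ?case
      by (simp add: smult_def Const_def distrib_left scale_monomials_add scale_monomials_single mult_single)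
  qed (simp add: smult_def)
  then show ?thesis by (simp add: lookup_scale_monomials)
qed

lemma scale_monomials_smult: "scale_monomials g (smult c p) = smult c (scale_monomials g p)"
  by (intro poly_mapping_eqI) (simp add: lookup_scale_monomials lookup_smult ac_simps)

lemma Const_mult: "Const a * Const b = (Const (a * b) :: 'k::field mpoly)"
  by (simp add: Const_def mult_single)

lemma Const_add: "Const a + Const b = (Const (a + b) :: 'k::field mpoly)"
  by (simp add: Const_def single_add)

lemma smult_one: "smult c (1::'k::field mpoly) = Const c"
  by (simp add: smult_def)

lemma smult_zero [simp]: "smult c (0::'k::field mpoly) = 0"
  by (simp add: smult_def)

lemma smult_smult: "smult c (smult d p) = smult (c * d) (p::'k::field mpoly)"
  by (simp add: smult_def mult.assoc[symmetric] Const_mult)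

lemma smult_minus: "smult c (- p) = - smult c (p::'k::field mpoly)"
  by (simp add: smult_def)

lemma smult_diff: "smult c (p - q) = smult c p - smult c (q::'k::field mpoly)"
  by (simp add: smult_def right_diff_distrib)

lemma smult_add_left: "smult (c + d) p = smult c p + smult d (p::'k::field mpoly)"
  by (simp add: smult_def distrib_right flip: Const_add)

lemma smult_mult_smult: "smult c p * smult d q = smult (c * d) (p * (q::'k::field mpoly))"
  by (simp add: smult_def ac_simps flip: Const_mult)

lemma smult_Var: "smult c (Var j) = Poly_Mapping.single (Poly_Mapping.single j 1) (c::'k::field)"
  by (simp add: smult_def Const_def Var_def mult_single)

subsection \<open>The subalgebras \<open>k[x\<^sub>1, \<dots>, x\<^sub>k]\<close>\<close>

lemma Bsub_iff: "p \<in> Bsub k \<longleftrightarrow> (\<forall>\<mu>\<in>Poly_Mapping.keys p. Poly_Mapping.keys \<mu> \<subseteq> {1..k})"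
  unfolding Bsub_def subset_iff atLeastAtMost_iff by blast

lemma Bsub_Const [simp]: "Const c \<in> Bsub k"
  by (simp add: Bsub_iff Const_def)

lemma Bsub_one [simp]: "1 \<in> Bsub k"
  by (simp add: Bsub_iff)

lemma Bsub_Var: "1 \<le> j \<Longrightarrow> j \<le> k \<Longrightarrow> Var j \<in> Bsub k"
  by (simp add: Bsub_iff Var_def)

lemma Bsub_diff: "p \<in> Bsub k \<Longrightarrow> q \<in> Bsub k \<Longrightarrow> p - q \<in> Bsub k"
  unfolding Bsub_iff using keys_diff[of p q] by blast

lemma Bsub_mult: "p \<in> Bsub k \<Longrightarrow> q \<in> Bsub k \<Longrightarrow> p * q \<in> Bsub k"
  unfolding Bsub_iff
proof (intro ballI)
  fix \<mu>
  assume p: "\<forall>\<mu>\<in>Poly_Mapping.keys p. Poly_Mapping.keys \<mu> \<subseteq> {1..k}"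
    and q: "\<forall>\<mu>\<in>Poly_Mapping.keys q. Poly_Mapping.keys \<mu> \<subseteq> {1..k}"
    and "\<mu> \<in> Poly_Mapping.keys (p * q)"
  then obtain a b where "\<mu> = a + b" "a \<in> Poly_Mapping.keys p" "b \<in> Poly_Mapping.keys q"
    using keys_mult[of p q] by auto
  with p q keys_add[of a b] show "Poly_Mapping.keys \<mu> \<subseteq> {1..k}" by blast
qed

lemma Bsub_smult: "p \<in> Bsub k \<Longrightarrow> smult c p \<in> Bsub k"
  by (simp add: smult_def Bsub_mult)

lemma Bsub_scale_monomials: "p \<in> Bsub k \<Longrightarrow> scale_monomials g p \<in> Bsub k"
  unfolding Bsub_iff using keys_scale_monomials by blast

lemma Var_power: "Var a ^ e = Poly_Mapping.single (Poly_Mapping.single a e) (1::'k::comm_ring_1)"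
proof (induct e)
  case (Suc e)
  have "Poly_Mapping.single a (Suc 0) + Poly_Mapping.single a e = Poly_Mapping.single a (Suc e)"
    by (simp flip: single_add)
  with Suc show ?case by (simp add: Var_def mult_single)
qed simp

lemma Bsub_monomial_induct:
  fixes P :: "'k::field mpoly \<Rightarrow> bool"
  assumes "Poly_Mapping.keys \<mu> \<subseteq> {1..k}"
    and Const: "\<And>c. P (Const c)"
    and Var_mult: "\<And>j q. 1 \<le> j \<Longrightarrow> j \<le> k \<Longrightarrow> q \<in> Bsub k \<Longrightarrow> P q \<Longrightarrow> P (Var j * q)"
  shows "P (Poly_Mapping.single \<mu> c)"
  using assms(1)
proof (induct \<mu> arbitrary: c rule: poly_mapping_add_single_induct)
  case 1
  show ?case using Const by (simp add: Const_def)
next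
  case (2 f a e)
  then have a: "1 \<le> a" "a \<le> k" and f: "Poly_Mapping.keys f \<subseteq> {1..k}"
    using keys_add_single[OF 2(1,2)] by auto
  have "Var a ^ d * Poly_Mapping.single f c \<in> Bsub k \<and> P (Var a ^ d * Poly_Mapping.single f c)" for d
  proof (induct d)
    case 0
    show ?case using f 2(3) by (simp add: Bsub_iff)
  next
    case (Suc d)
    then show ?case
      using Var_mult[OF a] Bsub_mult[OF Bsub_Var[OF a]] by (simp only: power_Suc mult.assoc) blast
  qed
  moreover have "Poly_Mapping.single (f + Poly_Mapping.single a e) c = Var a ^ e * Poly_Mapping.single f c"
    by (simp add: Var_power mult_single add.commute)
  ultimately show ?case by simp
qed

lemma Bsub_induct [consumes 1, case_names Const Var_mult add]:
  fixes P :: "'k::field mpoly \<Rightarrow> bool"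
  assumes "p \<in> Bsub k"
    and Const: "\<And>c. P (Const c)"
    and Var_mult: "\<And>j q. 1 \<le> j \<Longrightarrow> j \<le> k \<Longrightarrow> q \<in> Bsub k \<Longrightarrow> P q \<Longrightarrow> P (Var j * q)"
    and add: "\<And>p q. p \<in> Bsub k \<Longrightarrow> q \<in> Bsub k \<Longrightarrow> P p \<Longrightarrow> P q \<Longrightarrow> P (p + q)"
  shows "P p"
  using assms(1)
proof (induct p rule: poly_mapping_add_single_induct)
  case 1
  show ?case using Const[of 0] by (simp add: Const_def)
next
  case (2 f \<mu> c)
  then have "f \<in> Bsub k" and \<mu>: "Poly_Mapping.keys \<mu> \<subseteq> {1..k}"
    unfolding Bsub_iff keys_add_single[OF 2(1,2)] by auto
  moreover have "Poly_Mapping.single \<mu> c \<in> Bsub k"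
    using \<mu> by (simp add: Bsub_iff)
  moreover have "P (Poly_Mapping.single \<mu> c)"
    using \<mu> Const Var_mult by (rule Bsub_monomial_induct)
  ultimately show ?case using 2(3) add by blast
qed

definition weight :: "(nat \<Rightarrow> 'r \<Rightarrow> int) \<Rightarrow> (nat \<Rightarrow>\<^sub>0 nat) \<Rightarrow> 'r \<Rightarrow> int" where
  "weight \<chi> \<mu> = (\<lambda>l. \<Sum>j\<in>Poly_Mapping.keys \<mu>. int (Poly_Mapping.lookup \<mu> j) * \<chi> j l)"

lemma weight_eq_sum_superset:
  "finite K \<Longrightarrow> Poly_Mapping.keys \<mu> \<subseteq> K \<Longrightarrow>
    weight \<chi> \<mu> l = (\<Sum>j\<in>K. int (Poly_Mapping.lookup \<mu> j) * \<chi> j l)"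
  unfolding weight_def by (rule sum.mono_neutral_left) (auto simp: in_keys_iff)

lemma weight_add: "weight \<chi> (\<mu> + \<nu>) = (\<lambda>l. weight \<chi> \<mu> l + weight \<chi> \<nu> l)"
proof
  fix l
  let ?K = "Poly_Mapping.keys \<mu> \<union> Poly_Mapping.keys \<nu>"
  have "weight \<chi> (\<mu> + \<nu>) l = (\<Sum>j\<in>?K. int (Poly_Mapping.lookup (\<mu> + \<nu>) j) * \<chi> j l)"
    using keys_add[of \<mu> \<nu>] by (intro weight_eq_sum_superset) auto
  also have "\<dots> = (\<Sum>j\<in>?K. int (Poly_Mapping.lookup \<mu> j) * \<chi> j l)
      + (\<Sum>j\<in>?K. int (Poly_Mapping.lookup \<nu> j) * \<chi> j l)"
    by (simp add: lookup_add algebra_simps sum.distrib)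
  also have "\<dots> = weight \<chi> \<mu> l + weight \<chi> \<nu> l"
    by (simp add: weight_eq_sum_superset[of ?K])
  finally show "weight \<chi> (\<mu> + \<nu>) l = weight \<chi> \<mu> l + weight \<chi> \<nu> l" .
qed

lemma weight_single: "weight \<chi> (Poly_Mapping.single j 1) = \<chi> j"
  by (simp add: weight_def fun_eq_iff)

lemma character_add:
  "h \<in> torus \<Longrightarrow> character (\<lambda>l. a l + b l) h = character a h * character b h"
  unfolding character_def torus_def by (simp add: power_int_add prod.distrib)

lemma two_power_int_eq_1_iff: "(2::'k::field_char_0) powi d = 1 \<longleftrightarrow> d = 0"
proof
  assume two: "(2::'k) powi d = 1"
  obtain m where "d = int m \<or> d = - int m" by (metis int_cases2)
  then have "(2::'k) ^ m = 1"
    using two by (auto simp: power_int_minus)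
  then have "(2::nat) ^ m = 1" by (metis of_nat_eq_1_iff of_nat_numeral of_nat_power)
  with \<open>d = int m \<or> d = - int m\<close> show "d = 0" by simp
qed simp

text \<open>Characters separate the points of \<open>X(H)\<close>: evaluate at \<open>h = (1, \<dots>, 2, \<dots>, 1)\<close>.\<close>

lemma character_inject:
  fixes a b :: "'r::finite \<Rightarrow> int"
  assumes "\<forall>h\<in>(torus :: ('r \<Rightarrow> 'k::field_char_0) set). character a h = character b h"
  shows "a = b"
proof
  fix l0
  define h :: "'r \<Rightarrow> 'k" where "h = (\<lambda>l. if l = l0 then 2 else 1)"
  have "h \<in> torus" by (simp add: torus_def h_def)
  have character_h: "character c h = 2 powi (c l0)" for c :: "'r \<Rightarrow> int"
  proof -
    have "character c h = (\<Prod>l\<in>UNIV. if l = l0 then 2 powi (c l0) else 1)"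
      unfolding character_def h_def by (rule prod.cong) auto
    then show ?thesis by (simp add: prod.delta)
  qed
  have "(2::'k) powi (a l0) = 2 powi (b l0)"
    using assms \<open>h \<in> torus\<close> character_h by metis
  then have "(2::'k) powi (a l0 - b l0) = 1" by (simp add: power_int_diff)
  then show "a l0 = b l0" by (simp add: two_power_int_eq_1_iff)
qed

lemma pairing_add: "pairing \<eta> (\<lambda>l. a l + b l) = pairing \<eta> a + pairing \<eta> b"
  by (simp add: pairing_def algebra_simps sum.distrib)

subsection \<open>The diagonal torus action and its infinitesimal version\<close>

definition torus_act :: "(nat \<Rightarrow> 'r \<Rightarrow> int) \<Rightarrow> ('r::finite \<Rightarrow> 'k::field) \<Rightarrow> 'k mpoly \<Rightarrow> 'k mpoly" where
  "torus_act \<chi> h = scale_monomials (\<lambda>\<mu>. character (weight \<chi> \<mu>) h)"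

definition weight_derivation :: "(nat \<Rightarrow> 'r \<Rightarrow> int) \<Rightarrow> ('r::finite \<Rightarrow> 'k::field) \<Rightarrow> 'k mpoly \<Rightarrow> 'k mpoly" where
  "weight_derivation \<chi> \<eta> = scale_monomials (\<lambda>\<mu>. pairing \<eta> (weight \<chi> \<mu>))"

lemma torus_act_Var: "torus_act \<chi> h (Var j) = smult (character (\<chi> j) h) (Var j)"
  unfolding smult_Var unfolding torus_act_def Var_def scale_monomials_single weight_single by simp

lemma weight_derivation_Var: "weight_derivation \<chi> \<eta> (Var j) = smult (pairing \<eta> (\<chi> j)) (Var j)"
  unfolding smult_Var unfolding weight_derivation_def Var_def scale_monomials_single weight_single by simp

lemma derivation_weight_derivation: "derivation (Bsub k) (weight_derivation \<chi> \<eta>)"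
  unfolding derivation_def weight_derivation_def
  by (simp add: Bsub_scale_monomials scale_monomials_add scale_monomials_smult
      scale_monomials_leibniz weight_add pairing_add)

lemma poisson_automorphismD:
  assumes "poisson_automorphism A br f"
  shows "f 1 = 1"
    and "a \<in> A \<Longrightarrow> b \<in> A \<Longrightarrow> f (a + b) = f a + f b"
    and "a \<in> A \<Longrightarrow> b \<in> A \<Longrightarrow> f (a * b) = f a * f b"
    and "a \<in> A \<Longrightarrow> f (smult c a) = smult c (f a)"
    and "a \<in> A \<Longrightarrow> b \<in> A \<Longrightarrow> f (br a b) = br (f a) (f b)"
  using assms unfolding poisson_automorphism_def by blast+

lemma automorphism_eq_torus_act:
  fixes h :: "'r::finite \<Rightarrow> 'k::field"
  assumes "h \<in> torus" and f: "poisson_automorphism (Bsub n) br f"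
    and f_Var: "\<And>j. 1 \<le> j \<Longrightarrow> j \<le> n \<Longrightarrow> f (Var j) = smult (character (\<chi> j) h) (Var j)"
    and "p \<in> Bsub n"
  shows "f p = torus_act \<chi> h p"
  using \<open>p \<in> Bsub n\<close>
proof (induct p rule: Bsub_induct)
  case (Const c)
  have "f (Const c) = Const c"
    using poisson_automorphismD(1)[OF f] poisson_automorphismD(4)[OF f Bsub_one, of c]
    by (simp add: smult_one)
  then show ?case
    by (simp add: torus_act_def Const_def scale_monomials_single weight_def character_def)
next
  case (Var_mult j q)
  have "f (Var j * q) = f (Var j) * f q"
    using Var_mult by (simp add: poisson_automorphismD(3)[OF f] Bsub_Var)
  also have "\<dots> = torus_act \<chi> h (Var j) * torus_act \<chi> h q"
    using Var_mult f_Var by (simp add: torus_act_Var)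
  also have "\<dots> = torus_act \<chi> h (Var j * q)"
    unfolding torus_act_def using \<open>h \<in> torus\<close>
    by (intro scale_monomials_mult[symmetric]) (simp add: weight_add character_add)
  finally show ?case .
next
  case (add p q)
  then show ?case by (simp add: poisson_automorphismD(2)[OF f] torus_act_def scale_monomials_add)
qed

lemma derivationD:
  assumes "derivation B d"
  shows "a \<in> B \<Longrightarrow> d a \<in> B"
    and "a \<in> B \<Longrightarrow> b \<in> B \<Longrightarrow> d (a + b) = d a + d b"
    and "a \<in> B \<Longrightarrow> d (smult c a) = smult c (d a)"
    and "a \<in> B \<Longrightarrow> b \<in> B \<Longrightarrow> d (a * b) = d a * b + a * d b"
  using assms unfolding derivation_def by blast+

lemma derivation_Const:
  assumes "derivation B d" and "1 \<in> B"
  shows "d (Const c) = 0"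
proof -
  have "d 1 = d 1 + d 1"
    using derivationD(4)[OF assms(1,2,2)] by simp
  then have "d 1 = 0" by (metis add_cancel_right_right)
  then show ?thesis
    using derivationD(3)[OF assms, of c] by (simp add: smult_one)
qed

lemma derivation_eqI:
  assumes D: "derivation (Bsub k) D" and D': "derivation (Bsub k) D'"
    and Var: "\<And>j. 1 \<le> j \<Longrightarrow> j \<le> k \<Longrightarrow> D (Var j) = D' (Var j)"
    and "p \<in> Bsub k"
  shows "D p = D' p"
  using \<open>p \<in> Bsub k\<close>
proof (induct p rule: Bsub_induct)
  case (Const c)
  show ?case using derivation_Const[OF D] derivation_Const[OF D'] by simp
next
  case (Var_mult j q)
  then show ?case
    using Var by (simp add: derivationD(4)[OF D] derivationD(4)[OF D'] Bsub_Var)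
next
  case (add p q)
  then show ?case by (simp add: derivationD(2)[OF D] derivationD(2)[OF D'])
qed

lemma derivation_commutator:
  fixes a d :: "'k::field mpoly \<Rightarrow> 'k mpoly"
  assumes a: "derivation (Bsub k) a" and d: "derivation (Bsub k) d"
  shows "derivation (Bsub k) (\<lambda>x. a (d x) - d (a x))"
  unfolding derivation_def
proof (intro conjI ballI allI)
  fix x y :: "'k mpoly" assume x: "x \<in> Bsub k" and y: "y \<in> Bsub k"
  show "a (d x) - d (a x) \<in> Bsub k"
    using x by (simp add: derivationD(1)[OF a] derivationD(1)[OF d] Bsub_diff)
  show "a (d (x + y)) - d (a (x + y)) = a (d x) - d (a x) + (a (d y) - d (a y))"
    using x y by (simp add: derivationD(1,2)[OF a] derivationD(1,2)[OF d])
  show "a (d (x * y)) - d (a (x * y)) = (a (d x) - d (a x)) * y + x * (a (d y) - d (a y))"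
    using x y by (simp add: derivationD(1,2,4)[OF a] derivationD(1,2,4)[OF d] Bsub_mult algebra_simps)
next
  fix x :: "'k mpoly" and c assume x: "x \<in> Bsub k"
  show "a (d (smult c x)) - d (a (smult c x)) = smult c (a (d x) - d (a x))"
    using x by (simp add: derivationD(1,3)[OF a] derivationD(1,3)[OF d] smult_diff)
qed

lemma derivation_smult:
  fixes d :: "'k::field mpoly \<Rightarrow> 'k mpoly"
  assumes "derivation (Bsub k) d"
  shows "derivation (Bsub k) (\<lambda>x. smult s (d x))"
  unfolding derivation_def
proof (intro conjI ballI allI)
  fix x y :: "'k mpoly" and c assume x: "x \<in> Bsub k" and y: "y \<in> Bsub k"
  show "smult s (d x) \<in> Bsub k" using x by (simp add: derivationD(1)[OF assms] Bsub_smult)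
  show "smult s (d (x + y)) = smult s (d x) + smult s (d y)"
    using x y by (simp add: derivationD(2)[OF assms] smult_def distrib_left)
  show "smult s (d (x * y)) = smult s (d x) * y + x * smult s (d y)"
    using x y by (simp add: derivationD(4)[OF assms] smult_def algebra_simps)
  show "smult s (d (smult c x)) = smult c (smult s (d x))"
    using x by (simp add: derivationD(3)[OF assms] smult_smult mult.commute)
qed

subsection \<open>Eigenvectors\<close>

lemma eigenspace_cong:
  "(\<And>h a. h \<in> torus \<Longrightarrow> a \<in> A \<Longrightarrow> \<rho> h a = \<rho>' h a) \<Longrightarrow> eigenspace A \<rho> m = eigenspace A \<rho>' m"
  unfolding eigenspace_def by auto

lemma eigenspace_smult:
  assumes aut: "\<forall>h\<in>torus. poisson_automorphism (Bsub n) br (\<rho> h)"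
    and a: "a \<in> eigenspace (Bsub n) \<rho> m"
  shows "smult c a \<in> eigenspace (Bsub n) \<rho> m"
  unfolding eigenspace_def
proof (intro CollectI conjI ballI)
  have "a \<in> Bsub n" using a unfolding eigenspace_def by auto
  then show "smult c a \<in> Bsub n" by (rule Bsub_smult)
  fix h :: "'a \<Rightarrow> 'b" assume "h \<in> torus"
  then have "\<rho> h (smult c a) = smult c (\<rho> h a)"
    using aut \<open>a \<in> Bsub n\<close> poisson_automorphismD(4) by blast
  with \<open>h \<in> torus\<close> a show "\<rho> h (smult c a) = smult (character m h) (smult c a)"
    unfolding eigenspace_def by (simp add: smult_smult mult.commute)
qed

lemma eigenspace_diff:
  assumes aut: "\<forall>h\<in>torus. poisson_automorphism (Bsub n) br (\<rho> h)"
    and a: "a \<in> eigenspace (Bsub n) \<rho> m" and b: "b \<in> eigenspace (Bsub n) \<rho> m"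
  shows "a - b \<in> eigenspace (Bsub n) \<rho> m"
  unfolding eigenspace_def
proof (intro CollectI conjI ballI)
  show "a - b \<in> Bsub n" using a b unfolding eigenspace_def by (simp add: Bsub_diff)
  fix h :: "'a \<Rightarrow> 'b" assume "h \<in> torus"
  have "\<rho> h (a - b + b) = \<rho> h (a - b) + \<rho> h b"
    using aut \<open>h \<in> torus\<close> \<open>a - b \<in> Bsub n\<close> b poisson_automorphismD(2)
    unfolding eigenspace_def by blast
  then have "\<rho> h (a - b) = \<rho> h a - \<rho> h b" by (simp add: eq_diff_eq)
  with \<open>h \<in> torus\<close> a b show "\<rho> h (a - b) = smult (character m h) (a - b)"
    unfolding eigenspace_def by (simp add: smult_diff)
qed

lemma eigenspace_mult:
  assumes aut: "\<forall>h\<in>torus. poisson_automorphism (Bsub n) br (\<rho> h)"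
    and a: "a \<in> eigenspace (Bsub n) \<rho> m" and b: "b \<in> eigenspace (Bsub n) \<rho> m'"
  shows "a * b \<in> eigenspace (Bsub n) \<rho> (\<lambda>l. m l + m' l)"
  unfolding eigenspace_def
proof (intro CollectI conjI ballI)
  have "a \<in> Bsub n" "b \<in> Bsub n" using a b unfolding eigenspace_def by auto
  then show "a * b \<in> Bsub n" by (rule Bsub_mult)
  fix h :: "'a \<Rightarrow> 'b" assume "h \<in> torus"
  then have "\<rho> h (a * b) = \<rho> h a * \<rho> h b"
    using aut \<open>a \<in> Bsub n\<close> \<open>b \<in> Bsub n\<close> poisson_automorphismD(3) by blast
  also have "\<dots> = smult (character m h) a * smult (character m' h) b"
    using \<open>h \<in> torus\<close> a b unfolding eigenspace_def by simp
  finally show "\<rho> h (a * b) = smult (character (\<lambda>l. m l + m' l) h) (a * b)"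
    using \<open>h \<in> torus\<close> by (simp add: smult_mult_smult character_add)
qed

lemma bracket_smult_smult:
  assumes "poisson_bracket (Bsub n) br" and a: "a \<in> Bsub n" and b: "b \<in> Bsub n"
  shows "br (smult c a) (smult d b) = smult (c * d) (br a b)"
proof -
  have linear: "br (smult c x) y = smult c (br x y)" and anti: "br x y = - br y x"
    if "x \<in> Bsub n" "y \<in> Bsub n" for x y c
    using assms(1) that unfolding poisson_bracket_def by blast+
  have "br a (smult d b) = - smult d (br b a)"
    using anti[OF a Bsub_smult[OF b]] linear[OF b a] by simp
  also have "\<dots> = smult d (br a b)"
    using anti[OF b a] by (simp add: smult_minus)
  finally show ?thesis
    using linear[OF a Bsub_smult[OF b]] by (simp add: smult_smult)
qed

lemma eigenspace_bracket:
  assumes aut: "\<forall>h\<in>torus. poisson_automorphism (Bsub n) br (\<rho> h)"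
    and br: "poisson_bracket (Bsub n) br"
    and a: "a \<in> eigenspace (Bsub n) \<rho> m" and b: "b \<in> eigenspace (Bsub n) \<rho> m'"
  shows "br a b \<in> eigenspace (Bsub n) \<rho> (\<lambda>l. m l + m' l)"
  unfolding eigenspace_def
proof (intro CollectI conjI ballI)
  have "a \<in> Bsub n" "b \<in> Bsub n" using a b unfolding eigenspace_def by auto
  then show "br a b \<in> Bsub n" using br unfolding poisson_bracket_def by blast
  fix h :: "'a \<Rightarrow> 'b" assume "h \<in> torus"
  then have "\<rho> h (br a b) = br (\<rho> h a) (\<rho> h b)"
    using aut \<open>a \<in> Bsub n\<close> \<open>b \<in> Bsub n\<close> poisson_automorphismD(5) by blast
  also have "\<dots> = br (smult (character m h) a) (smult (character m' h) b)"
    using \<open>h \<in> torus\<close> a b unfolding eigenspace_def by simp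
  also have "\<dots> = smult (character (\<lambda>l. m l + m' l) h) (br a b)"
    using bracket_smult_smult[OF br \<open>a \<in> Bsub n\<close> \<open>b \<in> Bsub n\<close>] \<open>h \<in> torus\<close>
    by (simp add: character_add)
  finally show "\<rho> h (br a b) = smult (character (\<lambda>l. m l + m' l) h) (br a b)" .
qed

lemma weight_of_eigenvector:
  fixes p :: "'k::field_char_0 mpoly" and m :: "'r::finite \<Rightarrow> int"
  assumes "p \<in> eigenspace A (torus_act \<chi>) m" and "\<mu> \<in> Poly_Mapping.keys p"
  shows "weight \<chi> \<mu> = m"
proof (rule character_inject[where 'k = 'k], intro ballI)
  fix h :: "'r \<Rightarrow> 'k" assume "h \<in> torus"
  with assms(1) have "Poly_Mapping.lookup (torus_act \<chi> h p) \<mu>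
      = Poly_Mapping.lookup (smult (character m h) p) \<mu>"
    unfolding eigenspace_def by simp
  with assms(2) show "character (weight \<chi> \<mu>) h = character m h"
    by (simp add: torus_act_def lookup_scale_monomials lookup_smult in_keys_iff)
qed

lemma weight_derivation_eigenvector:
  fixes p :: "'k::field_char_0 mpoly" and m :: "'r::finite \<Rightarrow> int"
  assumes "p \<in> eigenspace A (torus_act \<chi>) m"
  shows "weight_derivation \<chi> \<eta> p = smult (pairing \<eta> m) p"
proof (rule poly_mapping_eqI)
  fix \<mu>
  show "Poly_Mapping.lookup (weight_derivation \<chi> \<eta> p) \<mu> = Poly_Mapping.lookup (smult (pairing \<eta> m) p) \<mu>"
    using weight_of_eigenvector[OF assms, of \<mu>]
    by (cases "\<mu> \<in> Poly_Mapping.keys p")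
       (simp_all add: weight_derivation_def lookup_scale_monomials lookup_smult in_keys_iff)
qed

lemma eigenspace_bracket_remainder:
  assumes aut: "\<forall>h\<in>torus. poisson_automorphism (Bsub n) br (\<rho> h)"
    and br: "poisson_bracket (Bsub n) br"
    and x: "x \<in> eigenspace (Bsub n) \<rho> m" and y: "y \<in> eigenspace (Bsub n) \<rho> m'"
    and "br x y = smult c y * x + d"
  shows "d \<in> eigenspace (Bsub n) \<rho> (\<lambda>l. m l + m' l)"
proof -
  have "d = br x y - x * smult c y"
    using assms(5) by (simp add: mult.commute)
  also have "\<dots> \<in> eigenspace (Bsub n) \<rho> (\<lambda>l. m l + m' l)"
    using aut by (intro eigenspace_diff eigenspace_bracket eigenspace_mult eigenspace_smult br x y)
  finally show ?thesis .
qed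

lemma derivation_commutator_eq_smult:
  fixes a d :: "'k::field mpoly \<Rightarrow> 'k mpoly"
  assumes a: "derivation (Bsub k) a" and d: "derivation (Bsub k) d"
    and a_Var: "\<And>j. 1 \<le> j \<Longrightarrow> j \<le> k \<Longrightarrow> a (Var j) = smult (t j) (Var j)"
    and a_d_Var: "\<And>j. 1 \<le> j \<Longrightarrow> j \<le> k \<Longrightarrow> a (d (Var j)) = smult (t j + s) (d (Var j))"
    and "p \<in> Bsub k"
  shows "a (d p) = d (a p) + smult s (d p)"
proof -
  have "a (d p) - d (a p) = smult s (d p)"
  proof (rule derivation_eqI[OF derivation_commutator[OF a d] derivation_smult[OF d] _ \<open>p \<in> Bsub k\<close>])
    fix j assume "1 \<le> j" "j \<le> k"
    then show "a (d (Var j)) - d (a (Var j)) = smult s (d (Var j))"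
      using a_Var a_d_Var derivationD(3)[OF d Bsub_Var] by (simp add: smult_add_left)
  qed
  then show ?thesis by (simp add: algebra_simps)
qed

lemma iterated_poissonD:
  assumes "iterated_poisson n br \<alpha> \<delta>" and "i \<in> {2..n}"
  shows "poisson_bracket (Bsub n) br"
    and "derivation (Bsub (i - 1)) (\<alpha> i)"
    and "derivation (Bsub (i - 1)) (\<delta> i)"
    and "b \<in> Bsub (i - 1) \<Longrightarrow> br (Var i) b = \<alpha> i b * Var i + \<delta> i b"
proof -
  have "n \<in> {1..n}" using assms(2) by simp
  moreover have "\<forall>i\<in>{1..n}. poisson_bracket (Bsub i) br"
    using assms(1) unfolding iterated_poisson_def by (rule conjunct1)
  ultimately show "poisson_bracket (Bsub n) br" by (rule bspec[rotated])
  have "\<forall>i\<in>{2..n}. poisson_derivation (Bsub (i - 1)) br (\<alpha> i) \<and>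
      twisted_derivation (Bsub (i - 1)) br (\<alpha> i) (\<delta> i) \<and>
      (\<forall>b\<in>Bsub (i - 1). br (Var i) b = \<alpha> i b * Var i + \<delta> i b)"
    using assms(1) unfolding iterated_poisson_def by (rule conjunct2)
  then have "poisson_derivation (Bsub (i - 1)) br (\<alpha> i) \<and>
      twisted_derivation (Bsub (i - 1)) br (\<alpha> i) (\<delta> i) \<and>
      (\<forall>b\<in>Bsub (i - 1). br (Var i) b = \<alpha> i b * Var i + \<delta> i b)"
    using assms(2) by (rule bspec)
  then show "derivation (Bsub (i - 1)) (\<alpha> i)" and "derivation (Bsub (i - 1)) (\<delta> i)"
    and "b \<in> Bsub (i - 1) \<Longrightarrow> br (Var i) b = \<alpha> i b * Var i + \<delta> i b"
    unfolding poisson_derivation_def twisted_derivation_def by blast+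
qed

lemma rational_poisson_action_eq_torus_act:
  assumes "rational_poisson_action (Bsub n) br \<rho>"
    and "\<forall>j\<in>{1..n}. Var j \<in> eigenspace (Bsub n) \<rho> (\<chi> j)"
    and "h \<in> torus" and "p \<in> Bsub n"
  shows "\<rho> h p = torus_act \<chi> h p"
proof (rule automorphism_eq_torus_act[OF assms(3) _ _ assms(4)])
  have "\<forall>h\<in>torus. poisson_automorphism (Bsub n) br (\<rho> h)"
    using assms(1) unfolding rational_poisson_action_def by (rule conjunct1)
  then show "poisson_automorphism (Bsub n) br (\<rho> h)"
    using assms(3) by (rule bspec)
  fix j assume "1 \<le> j" "j \<le> n"
  then have "Var j \<in> eigenspace (Bsub n) \<rho> (\<chi> j)"
    using assms(2) by simp
  then show "\<rho> h (Var j) = smult (character (\<chi> j) h) (Var j)"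
    using assms(3) unfolding eigenspace_def by blast
qed

theorem lemma4p2:
  fixes n :: nat
    and br :: "'k::field_char_0 mpoly \<Rightarrow> 'k mpoly \<Rightarrow> 'k mpoly"
    and \<alpha> \<delta> :: "nat \<Rightarrow> 'k mpoly \<Rightarrow> 'k mpoly"
    and \<rho> :: "('r::finite \<Rightarrow> 'k) \<Rightarrow> 'k mpoly \<Rightarrow> 'k mpoly"
    and \<chi> :: "nat \<Rightarrow> 'r \<Rightarrow> int"
    and \<eta> :: "nat \<Rightarrow> 'r \<Rightarrow> 'k"
  assumes "1 \<le> n"
    and "iterated_poisson n br \<alpha> \<delta>"
    and "rational_poisson_action (Bsub n) br \<rho>"
    and "\<forall>j\<in>{1..n}. Var j \<in> eigenspace (Bsub n) \<rho> (\<chi> j)"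
    and "\<forall>i\<in>{1..n}. \<forall>j\<in>{1..n}. j < i \<longrightarrow> smult (pairing (\<eta> i) (\<chi> j)) (Var j) = \<alpha> i (Var j)"
    and "\<forall>i\<in>{1..n}. pairing (\<eta> i) (\<chi> i) \<noteq> 0"
  shows "\<forall>i\<in>{2..n}. \<forall>b\<in>Bsub (i - 1).
           \<alpha> i (\<delta> i b) = \<delta> i (\<alpha> i b) + smult (pairing (\<eta> i) (\<chi> i)) (\<delta> i b)"
proof (intro ballI)
  fix i and b :: "'k mpoly" assume i: "i \<in> {2..n}" and b: "b \<in> Bsub (i - 1)"
  have aut: "\<forall>h\<in>torus. poisson_automorphism (Bsub n) br (\<rho> h)"
    using assms(3) unfolding rational_poisson_action_def by (rule conjunct1)
  have \<alpha>_Var: "\<alpha> i (Var j) = smult (pairing (\<eta> i) (\<chi> j)) (Var j)" if "1 \<le> j" "j \<le> i - 1" for j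
  proof -
    have "i \<in> {1..n}" "j \<in> {1..n}" "j < i" using i that by auto
    then show ?thesis using assms(5) by simp
  qed
  have \<alpha>_eq: "\<alpha> i p = weight_derivation \<chi> (\<eta> i) p" if "p \<in> Bsub (i - 1)" for p
    using derivation_eqI[OF iterated_poissonD(2)[OF assms(2) i]
        derivation_weight_derivation[of _ \<chi> "\<eta> i"] _ that]
    by (simp add: \<alpha>_Var weight_derivation_Var)
  have \<alpha>_\<delta>_Var: "\<alpha> i (\<delta> i (Var j)) = smult (pairing (\<eta> i) (\<chi> j) + pairing (\<eta> i) (\<chi> i)) (\<delta> i (Var j))"
    if j: "1 \<le> j" "j \<le> i - 1" for j
  proof -
    have "br (Var i) (Var j) = smult (pairing (\<eta> i) (\<chi> j)) (Var j) * Var i + \<delta> i (Var j)"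
      using iterated_poissonD(4)[OF assms(2) i Bsub_Var[OF j]] by (simp add: \<alpha>_Var[OF j])
    moreover have "Var i \<in> eigenspace (Bsub n) \<rho> (\<chi> i)" "Var j \<in> eigenspace (Bsub n) \<rho> (\<chi> j)"
      using assms(4) i j by auto
    ultimately have "\<delta> i (Var j) \<in> eigenspace (Bsub n) \<rho> (\<lambda>l. \<chi> i l + \<chi> j l)"
      by (intro eigenspace_bracket_remainder[OF aut iterated_poissonD(1)[OF assms(2) i]])
    then have "\<delta> i (Var j) \<in> eigenspace (Bsub n) (torus_act \<chi>) (\<lambda>l. \<chi> i l + \<chi> j l)"
      using rational_poisson_action_eq_torus_act[OF assms(3,4)] eigenspace_cong by blast
    moreover have "\<delta> i (Var j) \<in> Bsub (i - 1)"
      using derivationD(1)[OF iterated_poissonD(3)[OF assms(2) i] Bsub_Var[OF j]] .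
    ultimately show ?thesis
      by (simp add: \<alpha>_eq weight_derivation_eigenvector pairing_add add.commute)
  qed
  show "\<alpha> i (\<delta> i b) = \<delta> i (\<alpha> i b) + smult (pairing (\<eta> i) (\<chi> i)) (\<delta> i b)"
    by (rule derivation_commutator_eq_smult[where t = "\<lambda>j. pairing (\<eta> i) (\<chi> j)",
          OF iterated_poissonD(2,3)[OF assms(2) i] \<alpha>_Var \<alpha>_\<delta>_Var b])
qed

end
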